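(* Under the assumptions and notation of the context, let $(\mathbf x_N,\mathbf m_N,\mathbf p_N,\mathbf y_N)$ be the unique solution of the system (AV$_N$) and $(\mathbf m,\mathbf p,\mathbf y)$ the unique solution of (MF). Then there is a constant $C$ independent of $N$ and of the initial states such that $\sup_{0\le t\le T}\big(|\mathbf x_N(t)-\mathbf m(t)|+|\mathbf m_N(t)-\mathbf m(t)|+|\mathbf p_N(t)-\mathbf p(t)|+|\mathbf y_N(t)-\mathbf y(t)|\big)\le C|x^{(N)}(0)-m_0|$, where $x^{(N)}(0)=\frac1N\sum_{i=1}^Nx_i(0)$.
   Context: Fix integers $n,n_1\ge1$, $T>0$, constant matrices $A,G,\Gamma\in\mathbb R^{n\times n}$, $B\in\mathbb R^{n\times n_1}$, $\eta,m_0\in\mathbb R^n$, $\gamma>0$, symmetric $Q\ge0$, $H\ge0$ ($n\times n$), $R>0$ ($n_1\times n_1$); $x_1(0),\dots,x_N(0)\in\mathbb R^n$ deterministic. Write $\widehat Q=(I-\Gamma)^TQ(I-\Gamma)$, $|z|_M^2=z^TMz$, $\|h\|_{L^2}=(\int_0^T|h|^2dt)^{1/2}$. Assume (H1): with $\dot z=(A+G)z+g$, $z(0)=0$, $\bar J''(g)=\int_0^T\{-z^T\widehat Qz+\frac1\gamma|g|^2\}dt-z(T)^THz(T)$, there is $\epsilon_0>0$ with $\bar J''(g)\ge\epsilon_0\|g\|_{L^2}^2$ for all $g$; and (H2): for $\nu\in L^2(0,T;\mathbb R^{n_1})$ let $(z_i,z,q)$ solve $\dot z_i=Az_i+B\nu+Gz+\gamma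 q$, $\dot z=(A+G)z+\gamma q$, $\dot q=-(A+G)^Tq-(I-\Gamma)^TQ(z_i-\Gamma z)$, $z_i(0)=z(0)=0$, $q(T)=Hz_i(T)$, $\bar J^a(\nu)=\int_0^T\{|z_i-\Gamma z|_Q^2+\nu^TR\nu-\gamma|q|^2\}dt+|z_i(T)|_H^2$, and there is $\delta_0>0$ with $\bar J^a(\nu)\ge\delta_0\|\nu\|_{L^2}^2$ for all $\nu$. Assume (MF): $\dot{\mathbf m}=(A+G)\mathbf m+BR^{-1}B^T\mathbf y+\gamma\mathbf p$, $\dot{\mathbf p}=-(A+G)^T\mathbf p-(I-\Gamma)^TQ[\mathbf m-(\Gamma\mathbf m+\eta)]$, $\dot{\mathbf y}=-A^T\mathbf y+Q[\mathbf m-(\Gamma\mathbf m+\eta)]$, $\mathbf m(0)=m_0$, $\mathbf p(T)=H\mathbf m(T)$, $\mathbf y(T)=-H\mathbf m(T)$, has a unique solution, and set $\bar u^*=R^{-1}B^T\mathbf y$. (AV$_N$): $\dot{\mathbf x}_N=A\mathbf x_N+BR^{-1}B^T\mathbf y_N+G\mathbf m_N+\gamma\mathbf p_N$, $\dot{\mathbf m}_N=(A+G)\mathbf m_N+B\bar u^*+\gamma\mathbf p_N$, $\dot{\mathbf p}_N=-(A+G)^T\mathbf p_N-(I-\Gamma)^TQ[\mathbf x_N-(\Gamma\mathbf m_N+\eta)]$, $\dot{\mathbf y}_N=-A^T\mathbf y_N+Q[\mathbf x_N-(\Gamma\mathbf m_N+\eta)]$, with $\mathbf x_N(0)=\frac1N\sum_{i=1}^Nx_i(0)$,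 $\mathbf m_N(0)=m_0$, $\mathbf p_N(T)=H\mathbf x_N(T)$, $\mathbf y_N(T)=-H\mathbf x_N(T)$ (uniquely solvable under these assumptions). *)

theory Defs
  imports "HOL-Analysis.Analysis"
begin

definition L2_on :: "real \<Rightarrow> (real \<Rightarrow> 'a::euclidean_space) \<Rightarrow> bool" where
  "L2_on T g \<longleftrightarrow> set_integrable lborel {0..T} g
     \<and> set_integrable lborel {0..T} (\<lambda>t. (norm (g t))\<^sup>2)"

definition L2_norm_sq :: "real \<Rightarrow> (real \<Rightarrow> 'a::euclidean_space) \<Rightarrow> real" where
  "L2_norm_sq T g = set_lebesgue_integral lborel {0..T} (\<lambda>t. (norm (g t))\<^sup>2)"

definition qf :: "real^'n^'n \<Rightarrow> real^'n \<Rightarrow> real" where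
  "qf M z = z \<bullet> (M *v z)"

definition psd :: "real^'n^'n \<Rightarrow> bool" where
  "psd M \<longleftrightarrow> transpose M = M \<and> (\<forall>z. qf M z \<ge> 0)"

definition pd :: "real^'n^'n \<Rightarrow> bool" where
  "pd M \<longleftrightarrow> transpose M = M \<and> (\<forall>z. z \<noteq> 0 \<longrightarrow> qf M z > 0)"

definition Qhat :: "real^'n^'n \<Rightarrow> real^'n^'n \<Rightarrow> real^'n^'n" where
  "Qhat Q \<Gamma> = transpose (mat 1 - \<Gamma>) ** Q ** (mat 1 - \<Gamma>)"

text \<open>Assumption (H1). Solutions of the ODE with L^2 input are understood in the
  integral (Caratheodory) sense: continuous z with
  z(t) = int_0^t ((A+G) z + g).\<close>
definition H1 :: "real \<Rightarrow> real \<Rightarrow> real^'n^'n \<Rightarrow> real^'n^'n \<Rightarrow> real^'n^'n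
                  \<Rightarrow> real^'n^'n \<Rightarrow> real^'n^'n \<Rightarrow> bool" where
  "H1 T \<gamma> A G \<Gamma> Q H \<longleftrightarrow>
    (\<exists>\<epsilon>0>0. \<forall>(g::real \<Rightarrow> real^'n) z.
       L2_on T g \<and> continuous_on {0..T} z \<and>
       (\<forall>t\<in>{0..T}. z t = set_lebesgue_integral lborel {0..t} (\<lambda>s. (A + G) *v z s + g s))
       \<longrightarrow> set_lebesgue_integral lborel {0..T}
              (\<lambda>t. - qf (Qhat Q \<Gamma>) (z t) + (1 / \<gamma>) * (norm (g t))\<^sup>2)
            - qf H (z T) \<ge> \<epsilon>0 * L2_norm_sq T g)"

text \<open>Assumption (H2), again in integral form; the terminal condition
  q(T) = H z_i(T) together with q' = -(A+G)^T q - (I-Gamma)^T Q (z_i - Gamma z) gives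
  q(t) = H z_i(T) + int_t^T ((A+G)^T q + (I-Gamma)^T Q (z_i - Gamma z)).\<close>
definition H2 :: "real \<Rightarrow> real \<Rightarrow> real^'n^'n \<Rightarrow> real^'k^'n \<Rightarrow> real^'n^'n \<Rightarrow> real^'n^'n
                  \<Rightarrow> real^'n^'n \<Rightarrow> real^'n^'n \<Rightarrow> real^'k^'k \<Rightarrow> bool" where
  "H2 T \<gamma> A B G \<Gamma> Q H R \<longleftrightarrow>
    (\<exists>\<delta>0>0. \<forall>(\<nu>::real \<Rightarrow> real^'k) zi z q.
       L2_on T \<nu> \<and> continuous_on {0..T} zi \<and> continuous_on {0..T} z \<and> continuous_on {0..T} q \<and>
       (\<forall>t\<in>{0..T}. zi t = set_lebesgue_integral lborel {0..t}
           (\<lambda>s. A *v zi s + B *v \<nu> s + G *v z s + \<gamma> *\<^sub>R q s)) \<and>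
       (\<forall>t\<in>{0..T}. z t = set_lebesgue_integral lborel {0..t}
           (\<lambda>s. (A + G) *v z s + \<gamma> *\<^sub>R q s)) \<and>
       (\<forall>t\<in>{0..T}. q t = H *v zi T + set_lebesgue_integral lborel {t..T}
           (\<lambda>s. transpose (A + G) *v q s + (transpose (mat 1 - \<Gamma>) ** Q) *v (zi s - \<Gamma> *v z s)))
       \<longrightarrow> set_lebesgue_integral lborel {0..T}
              (\<lambda>t. qf Q (zi t - \<Gamma> *v z t) + qf R (\<nu> t) - \<gamma> * (norm (q t))\<^sup>2)
            + qf H (zi T) \<ge> \<delta>0 * L2_norm_sq T \<nu>)"

definition MF_sol :: "real \<Rightarrow> real \<Rightarrow> real^'n^'n \<Rightarrow> real^'k^'n \<Rightarrow> real^'n^'n \<Rightarrow> real^'n^'n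
                  \<Rightarrow> real^'n^'n \<Rightarrow> real^'n^'n \<Rightarrow> real^'k^'k \<Rightarrow> real^'n \<Rightarrow> real^'n
                  \<Rightarrow> (real \<Rightarrow> real^'n) \<Rightarrow> (real \<Rightarrow> real^'n) \<Rightarrow> (real \<Rightarrow> real^'n) \<Rightarrow> bool" where
  "MF_sol T \<gamma> A B G \<Gamma> Q H R \<eta> m0 m p y \<longleftrightarrow>
    (\<forall>t\<in>{0..T}.
       (m has_vector_derivative
          ((A + G) *v m t + (B ** matrix_inv R ** transpose B) *v y t + \<gamma> *\<^sub>R p t)) (at t within {0..T})
     \<and> (p has_vector_derivative
          (- (transpose (A + G) *v p t) - (transpose (mat 1 - \<Gamma>) ** Q) *v (m t - (\<Gamma> *v m t + \<eta>))))
          (at t within {0..T})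
     \<and> (y has_vector_derivative
          (- (transpose A *v y t) + Q *v (m t - (\<Gamma> *v m t + \<eta>)))) (at t within {0..T}))
    \<and> m 0 = m0 \<and> p T = H *v m T \<and> y T = - (H *v m T)"

text \<open>Classical solutions on [0,T] of the system (AV_N); ubar = R^{-1} B^T y with y from (MF),
  and xbar is the prescribed initial value of x_N.\<close>
definition AV_sol :: "real \<Rightarrow> real \<Rightarrow> real^'n^'n \<Rightarrow> real^'k^'n \<Rightarrow> real^'n^'n \<Rightarrow> real^'n^'n
                  \<Rightarrow> real^'n^'n \<Rightarrow> real^'n^'n \<Rightarrow> real^'k^'k \<Rightarrow> real^'n \<Rightarrow> real^'n
                  \<Rightarrow> (real \<Rightarrow> real^'k) \<Rightarrow> real^'n
                  \<Rightarrow> (real \<Rightarrow> real^'n) \<Rightarrow> (real \<Rightarrow> real^'n) \<Rightarrow> (real \<Rightarrow> real^'n) \<Rightarrow> (real \<Rightarrow> real^'n)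
                  \<Rightarrow> bool" where
  "AV_sol T \<gamma> A B G \<Gamma> Q H R \<eta> m0 ubar xbar xN mN pN yN \<longleftrightarrow>
    (\<forall>t\<in>{0..T}.
       (xN has_vector_derivative
          (A *v xN t + (B ** matrix_inv R ** transpose B) *v yN t + G *v mN t + \<gamma> *\<^sub>R pN t))
          (at t within {0..T})
     \<and> (mN has_vector_derivative ((A + G) *v mN t + B *v ubar t + \<gamma> *\<^sub>R pN t)) (at t within {0..T})
     \<and> (pN has_vector_derivative
          (- (transpose (A + G) *v pN t) - (transpose (mat 1 - \<Gamma>) ** Q) *v (xN t - (\<Gamma> *v mN t + \<eta>))))
          (at t within {0..T})
     \<and> (yN has_vector_derivative
          (- (transpose A *v yN t) + Q *v (xN t - (\<Gamma> *v mN t + \<eta>)))) (at t within {0..T}))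
    \<and> xN 0 = xbar \<and> mN 0 = m0 \<and> pN T = H *v xN T \<and> yN T = - (H *v xN T)"

end

theory Submission
  imports Defs
begin

(* The deviations (x_N - m, m_N - m, p_N - p, y_N - y) solve the homogeneous linear system
   obtained by subtracting (MF) from (AV_N), whose only nonzero datum is x_N(0) - m_0.  Its
   solutions form a linear space, and by Gronwall each of them is bounded on [0,T] by its value
   at 0.  In finite dimension it therefore suffices that x(0) = 0 forces the whole initial value
   to vanish.  The pairing (x - m).y - m.p has as derivative the integrand of J^a at the control
   nu = R^-1 B^T y, so J^a(nu) = 0 and (H2) gives nu = 0; then x = m, and the pairing m.p shows
   in the same way that J'' vanishes at g = gamma p, so p = 0 by (H1); finally m = 0 and y = 0. *)

lemma exp_growth_bounds:
  fixes \<phi> \<phi>' :: "real \<Rightarrow> real"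
  assumes "s \<le> t" and cont: "continuous_on {s..t} \<phi>"
    and deriv: "\<And>u. s < u \<Longrightarrow> u < t \<Longrightarrow> (\<phi> has_real_derivative \<phi>' u) (at u)"
    and bound: "\<And>u. s < u \<Longrightarrow> u < t \<Longrightarrow> \<bar>\<phi>' u\<bar> \<le> K * \<phi> u"
  shows "\<phi> t \<le> exp (K * (t - s)) * \<phi> s" and "\<phi> s \<le> exp (K * (t - s)) * \<phi> t"
proof -
  have "exp (- K * t) * \<phi> t \<le> exp (- K * s) * \<phi> s"
  proof (rule DERIV_nonpos_imp_decreasing_open[OF \<open>s \<le> t\<close>])
    fix u assume u: "s < u" "u < t"
    have "exp (- K * u) * (\<phi>' u - K * \<phi> u) \<le> 0"
      using bound[OF u] by (intro mult_nonneg_nonpos) auto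
    moreover have "((\<lambda>u. exp (- K * u) * \<phi> u) has_real_derivative exp (- K * u) * (\<phi>' u - K * \<phi> u)) (at u)"
      using deriv[OF u] by (auto intro!: derivative_eq_intros simp: algebra_simps)
    ultimately show "\<exists>y. ((\<lambda>u. exp (- K * u) * \<phi> u) has_real_derivative y) (at u) \<and> y \<le> 0"
      by blast
  qed (intro continuous_intros cont)
  then show "\<phi> t \<le> exp (K * (t - s)) * \<phi> s"
    by (simp add: exp_minus exp_diff field_simps)
  have "exp (K * s) * \<phi> s \<le> exp (K * t) * \<phi> t"
  proof (rule DERIV_nonneg_imp_increasing_open[OF \<open>s \<le> t\<close>])
    fix u assume u: "s < u" "u < t"
    have "exp (K * u) * (\<phi>' u + K * \<phi> u) \<ge> 0"
      using bound[OF u] by (intro mult_nonneg_nonneg) auto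
    moreover have "((\<lambda>u. exp (K * u) * \<phi> u) has_real_derivative exp (K * u) * (\<phi>' u + K * \<phi> u)) (at u)"
      using deriv[OF u] by (auto intro!: derivative_eq_intros simp: algebra_simps)
    ultimately show "\<exists>y. ((\<lambda>u. exp (K * u) * \<phi> u) has_real_derivative y) (at u) \<and> y \<ge> 0"
      by blast
  qed (intro continuous_intros cont)
  then show "\<phi> s \<le> exp (K * (t - s)) * \<phi> t"
    by (simp add: exp_diff field_simps)
qed

lemma norm_exp_growth_bounds:
  fixes w :: "real \<Rightarrow> 'a::real_inner"
  assumes deriv: "\<And>u. u \<in> {a..b} \<Longrightarrow> (w has_vector_derivative F u) (at u within {a..b})"
    and bound: "\<And>u. u \<in> {a..b} \<Longrightarrow> norm (F u) \<le> L * norm (w u)"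
    and st: "a \<le> s" "s \<le> t" "t \<le> b"
  shows "norm (w t) \<le> exp (L * (t - s)) * norm (w s)"
    and "norm (w s) \<le> exp (L * (t - s)) * norm (w t)"
proof -
  let ?\<phi> = "\<lambda>u. (norm (w u))\<^sup>2"
  have "continuous_on {a..b} w"
    using deriv by (rule continuous_on_vector_derivative)
  then have "continuous_on {s..t} w"
    by (rule continuous_on_subset) (use st in auto)
  then have cont: "continuous_on {s..t} ?\<phi>"
    by (intro continuous_intros)
  have \<phi>_deriv: "(?\<phi> has_real_derivative 2 * (w u \<bullet> F u)) (at u)" if "s < u" "u < t" for u
  proof -
    have "(w has_vector_derivative F u) (at u)"
      using deriv[of u] that st at_within_interior[of u "{a..b}"] by auto
    from bounded_bilinear.has_vector_derivative[OF bounded_bilinear_inner this this]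
    show ?thesis
      by (simp add: power2_norm_eq_inner has_real_derivative_iff_has_vector_derivative inner_commute)
  qed
  have \<phi>_deriv_bound: "\<bar>2 * (w u \<bullet> F u)\<bar> \<le> 2 * L * ?\<phi> u" if "s < u" "u < t" for u
  proof -
    have "\<bar>w u \<bullet> F u\<bar> \<le> norm (w u) * norm (F u)" by (rule Cauchy_Schwarz_ineq2)
    also have "\<dots> \<le> norm (w u) * (L * norm (w u))"
      using bound[of u] that st by (intro mult_left_mono) auto
    finally show ?thesis by (simp add: power2_eq_square abs_mult mult_ac)
  qed
  have "?\<phi> t \<le> exp (2 * L * (t - s)) * ?\<phi> s" "?\<phi> s \<le> exp (2 * L * (t - s)) * ?\<phi> t"
    using exp_growth_bounds[OF \<open>s \<le> t\<close> cont \<phi>_deriv \<phi>_deriv_bound] by auto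
  then have "(norm (w t))\<^sup>2 \<le> (exp (L * (t - s)) * norm (w s))\<^sup>2"
    and "(norm (w s))\<^sup>2 \<le> (exp (L * (t - s)) * norm (w t))\<^sup>2"
    by (simp_all add: power_mult_distrib flip: exp_double) (simp_all add: mult_ac)
  then show "norm (w t) \<le> exp (L * (t - s)) * norm (w s)"
    and "norm (w s) \<le> exp (L * (t - s)) * norm (w t)"
    by (auto intro: power2_le_imp_le)
qed

lemma continuous_on_matrix_vector_mult [continuous_intros]:
  "continuous_on S f \<Longrightarrow> continuous_on S (\<lambda>t. (A::real^'n^'m) *v f t)"
  by (rule bounded_linear.continuous_on[OF matrix_vector_mul_bounded_linear])

lemma set_integral_vector_derivative:
  fixes f f' :: "real \<Rightarrow> 'a::euclidean_space"
  assumes deriv: "\<And>u. u \<in> {a..b} \<Longrightarrow> (f has_vector_derivative f' u) (at u within {a..b})"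
    and cont: "continuous_on {a..b} f'"
    and t: "t \<in> {a..b}"
  shows "f t = f a + (LINT s:{a..t}|lborel. f' s)"
    and "f t = f b - (LINT s:{t..b}|lborel. f' s)"
proof -
  have FTC: "(LINT s:{c..d}|lborel. f' s) = f d - f c" if "a \<le> c" "c \<le> d" "d \<le> b" for c d
    unfolding set_lebesgue_integral_def
  proof (rule integral_FTC_atLeastAtMost[OF \<open>c \<le> d\<close>])
    show "(f has_vector_derivative f' u) (at u within {c..d})" if "c \<le> u" "u \<le> d" for u
      using deriv[of u] that \<open>a \<le> c\<close> \<open>d \<le> b\<close>
      by (auto intro: has_vector_derivative_within_subset)
    show "continuous_on {c..d} f'"
      using cont by (rule continuous_on_subset) (use that in auto)
  qed
  show "f t = f a + (LINT s:{a..t}|lborel. f' s)" and "f t = f b - (LINT s:{t..b}|lborel. f' s)"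
    using FTC[of a t] FTC[of t b] t by auto
qed

lemma L2_on_continuous: "continuous_on {0..T} g \<Longrightarrow> L2_on T g"
  unfolding L2_on_def by (auto intro!: borel_integrable_atLeastAtMost' continuous_intros)

lemma L2_norm_sq_le_0_imp_zero:
  assumes "T > 0" and cont: "continuous_on {0..T} g" and le: "L2_norm_sq T g \<le> 0"
    and t: "t \<in> {0..T}"
  shows "g t = 0"
proof -
  let ?h = "\<lambda>t. (norm (g t))\<^sup>2"
  have cont_h: "continuous_on {0..T} ?h"
    using cont by (intro continuous_intros)
  have "set_integrable lborel {0..T} ?h"
    using cont_h by (rule borel_integrable_atLeastAtMost')
  then have "L2_norm_sq T g = integral {0..T} ?h" and "?h integrable_on {0..T}"
    unfolding L2_norm_sq_def by (simp_all add: set_borel_integral_eq_integral)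
  moreover have "integral {0..T} ?h \<ge> 0"
    using \<open>?h integrable_on {0..T}\<close> by (intro integral_nonneg) auto
  ultimately have "integral {0..T} ?h = 0"
    using le by simp
  then show ?thesis
    using integral_eq_0_iff[OF cont_h \<open>T > 0\<close>] t by simp
qed

lemma H2_cost_nonpos_imp_zero:
  fixes \<nu> :: "real \<Rightarrow> real^'k" and zi z q :: "real \<Rightarrow> real^'n"
  assumes H2: "H2 T \<gamma> A B G \<Gamma> Q H R" and "T > 0"
    and cont_\<nu>: "continuous_on {0..T} \<nu>"
    and dzi: "\<And>t. t \<in> {0..T} \<Longrightarrow>
       (zi has_vector_derivative A *v zi t + B *v \<nu> t + G *v z t + \<gamma> *\<^sub>R q t) (at t within {0..T})"
    and dz: "\<And>t. t \<in> {0..T} \<Longrightarrow>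
       (z has_vector_derivative (A + G) *v z t + \<gamma> *\<^sub>R q t) (at t within {0..T})"
    and dq: "\<And>t. t \<in> {0..T} \<Longrightarrow> (q has_vector_derivative
       - (transpose (A + G) *v q t) - (transpose (mat 1 - \<Gamma>) ** Q) *v (zi t - \<Gamma> *v z t)) (at t within {0..T})"
    and zi0: "zi 0 = 0" and z0: "z 0 = 0" and qT: "q T = H *v zi T"
    and cost: "(LINT t:{0..T}|lborel. qf Q (zi t - \<Gamma> *v z t) + qf R (\<nu> t) - \<gamma> * (norm (q t))\<^sup>2)
       + qf H (zi T) \<le> 0" (is "?J \<le> 0")
    and t: "t \<in> {0..T}"
  shows "\<nu> t = 0"
proof -
  have cont_zi: "continuous_on {0..T} zi"
    using dzi by (rule continuous_on_vector_derivative)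
  have cont_z: "continuous_on {0..T} z"
    using dz by (rule continuous_on_vector_derivative)
  have cont_q: "continuous_on {0..T} q"
    using dq by (rule continuous_on_vector_derivative)
  have "zi t = (LINT s:{0..t}|lborel. A *v zi s + B *v \<nu> s + G *v z s + \<gamma> *\<^sub>R q s)" if "t \<in> {0..T}" for t
    using set_integral_vector_derivative(1)[OF dzi _ that] zi0 cont_zi cont_z cont_q cont_\<nu>
    by (simp add: continuous_intros)
  moreover have "z t = (LINT s:{0..t}|lborel. (A + G) *v z s + \<gamma> *\<^sub>R q s)" if "t \<in> {0..T}" for t
    using set_integral_vector_derivative(1)[OF dz _ that] z0 cont_z cont_q
    by (simp add: continuous_intros)
  moreover have "q t = H *v zi T + (LINT s:{t..T}|lborel.
      transpose (A + G) *v q s + (transpose (mat 1 - \<Gamma>) ** Q) *v (zi s - \<Gamma> *v z s))" if "t \<in> {0..T}" for t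
  proof -
    have "((\<lambda>t. - q t) has_vector_derivative
        transpose (A + G) *v q t + (transpose (mat 1 - \<Gamma>) ** Q) *v (zi t - \<Gamma> *v z t)) (at t within {0..T})"
      if "t \<in> {0..T}" for t
      using has_vector_derivative_minus[OF dq[OF that]] by (simp add: add.commute)
    moreover have "continuous_on {0..T}
        (\<lambda>t. transpose (A + G) *v q t + (transpose (mat 1 - \<Gamma>) ** Q) *v (zi t - \<Gamma> *v z t))"
      using cont_zi cont_z cont_q by (intro continuous_intros)
    ultimately show ?thesis
      using set_integral_vector_derivative(2)[of 0 T "\<lambda>t. - q t", OF _ _ that] qT
      by (simp add: eq_neg_iff_add_eq_0 algebra_simps)
  qed
  ultimately obtain \<delta> where "\<delta> > 0" and "\<delta> * L2_norm_sq T \<nu> \<le> ?J"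
    using H2 L2_on_continuous[OF cont_\<nu>] cont_zi cont_z cont_q unfolding H2_def by blast
  then have "L2_norm_sq T \<nu> \<le> 0"
    using cost by (smt (verit) mult_le_0_iff)
  then show ?thesis
    using L2_norm_sq_le_0_imp_zero[OF \<open>T > 0\<close> cont_\<nu> _ t] by blast
qed

lemma H1_cost_nonpos_imp_zero:
  fixes g z :: "real \<Rightarrow> real^'n"
  assumes H1: "H1 T \<gamma> A G \<Gamma> Q H" and "T > 0"
    and cont_g: "continuous_on {0..T} g"
    and dz: "\<And>t. t \<in> {0..T} \<Longrightarrow> (z has_vector_derivative (A + G) *v z t + g t) (at t within {0..T})"
    and z0: "z 0 = 0"
    and cost: "(LINT t:{0..T}|lborel. - qf (Qhat Q \<Gamma>) (z t) + (1 / \<gamma>) * (norm (g t))\<^sup>2) - qf H (z T) \<le> 0"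
      (is "?J \<le> 0")
    and t: "t \<in> {0..T}"
  shows "g t = 0"
proof -
  have cont_z: "continuous_on {0..T} z"
    using dz by (rule continuous_on_vector_derivative)
  have "z t = (LINT s:{0..t}|lborel. (A + G) *v z s + g s)" if "t \<in> {0..T}" for t
    using set_integral_vector_derivative(1)[OF dz _ that] z0 cont_z cont_g
    by (simp add: continuous_intros)
  then obtain \<epsilon> where "\<epsilon> > 0" and "\<epsilon> * L2_norm_sq T g \<le> ?J"
    using H1 L2_on_continuous[OF cont_g] cont_z unfolding H1_def by blast
  then have "L2_norm_sq T g \<le> 0"
    using cost by (smt (verit) mult_le_0_iff)
  then show ?thesis
    using L2_norm_sq_le_0_imp_zero[OF \<open>T > 0\<close> cont_g _ t] by blast
qed

lemma inner_matrix_vector_mult_transpose: "((A::real^'n^'m) *v x) \<bullet> y = x \<bullet> (transpose A *v y)"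
  by (metis dot_lmul_matrix inner_commute transpose_matrix_vector)

lemma matrix_mul_matrix_inv_right:
  assumes "invertible (A::real^'n^'n)"
  shows "A ** matrix_inv A = mat 1"
  using assms unfolding invertible_def matrix_inv_def by (rule someI_ex[THEN conjunct1])

lemma pd_imp_invertible:
  assumes "pd R"
  shows "invertible R"
proof -
  have "x = 0" if "R *v x = 0" for x
    using assms that unfolding pd_def qf_def by force
  then show ?thesis
    by (simp add: invertible_left_inverse matrix_left_invertible_ker)
qed

(* The derivative of (x - m).y - m.p along the homogeneous system, by the product rule. *)
lemma H2_duality_identity:
  fixes x m p y :: "real^'n" and u :: "real^'k" and A G \<Gamma> Q :: "real^'n^'n" and B :: "real^'k^'n"
    and R :: "real^'k^'k"
  assumes Ru: "R *v u = transpose B *v y"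
  shows "(x - m) \<bullet> (- (transpose A *v y) + Q *v (x - \<Gamma> *v m))
      + ((A *v x + B *v u + G *v m + \<gamma> *\<^sub>R p) - ((A + G) *v m + \<gamma> *\<^sub>R p)) \<bullet> y
      - (m \<bullet> (- (transpose (A + G) *v p) - (transpose (mat 1 - \<Gamma>) ** Q) *v (x - \<Gamma> *v m))
         + ((A + G) *v m + \<gamma> *\<^sub>R p) \<bullet> p)
    = qf Q (x - \<Gamma> *v m) + qf R u - \<gamma> * (norm p)\<^sup>2"
proof -
  define v where "v = x - \<Gamma> *v m"
  have Bu: "(B *v u) \<bullet> y = qf R u"
    using inner_matrix_vector_mult_transpose[of B u y] Ru unfolding qf_def by simp
  have Ax: "(A *v (x - m)) \<bullet> y = (x - m) \<bullet> (transpose A *v y)"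
    by (rule inner_matrix_vector_mult_transpose)
  have AGm: "((A + G) *v m) \<bullet> p = m \<bullet> (transpose (A + G) *v p)"
    by (rule inner_matrix_vector_mult_transpose)
  have "m \<bullet> ((transpose (mat 1 - \<Gamma>) ** Q) *v v) = m \<bullet> (transpose (mat 1 - \<Gamma>) *v (Q *v v))"
    by (simp add: matrix_vector_mul_assoc)
  also have "\<dots> = ((mat 1 - \<Gamma>) *v m) \<bullet> (Q *v v)"
    by (rule inner_matrix_vector_mult_transpose[symmetric])
  finally have \<Gamma>Q: "m \<bullet> ((transpose (mat 1 - \<Gamma>) ** Q) *v v) = (m - \<Gamma> *v m) \<bullet> (Q *v v)"
    by (simp add: matrix_vector_mult_diff_rdistrib)
  have diff: "(A *v x + B *v u + G *v m + \<gamma> *\<^sub>R p) - ((A + G) *v m + \<gamma> *\<^sub>R p) = A *v (x - m) + B *v u"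
    by (simp add: algebra_simps)
  have "(x - m) \<bullet> (- (transpose A *v y) + Q *v v)
      + ((A *v x + B *v u + G *v m + \<gamma> *\<^sub>R p) - ((A + G) *v m + \<gamma> *\<^sub>R p)) \<bullet> y
      - (m \<bullet> (- (transpose (A + G) *v p) - (transpose (mat 1 - \<Gamma>) ** Q) *v v)
         + ((A + G) *v m + \<gamma> *\<^sub>R p) \<bullet> p)
      = (A *v (x - m)) \<bullet> y + (B *v u) \<bullet> y - (x - m) \<bullet> (transpose A *v y) + (x - m) \<bullet> (Q *v v)
        - (((A + G) *v m) \<bullet> p - m \<bullet> (transpose (A + G) *v p)) - \<gamma> * (p \<bullet> p)
        + m \<bullet> ((transpose (mat 1 - \<Gamma>) ** Q) *v v)"
    unfolding diff by (simp add: inner_add_left inner_add_right inner_diff_left inner_diff_right algebra_simps)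
  also have "\<dots> = qf R u + (x - m) \<bullet> (Q *v v) + (m - \<Gamma> *v m) \<bullet> (Q *v v) - \<gamma> * (p \<bullet> p)"
    unfolding Bu Ax AGm \<Gamma>Q by simp
  also have "\<dots> = qf R u + ((x - m) + (m - \<Gamma> *v m)) \<bullet> (Q *v v) - \<gamma> * (p \<bullet> p)"
    by (simp only: inner_add_left)
  also have "\<dots> = qf Q v + qf R u - \<gamma> * (norm p)\<^sup>2"
    unfolding qf_def v_def by (simp add: power2_norm_eq_inner)
  finally show ?thesis
    unfolding v_def .
qed

(* The derivative of m.p along the homogeneous system when x = m. *)
lemma H1_duality_identity:
  fixes m p :: "real^'n" and A G \<Gamma> Q :: "real^'n^'n"
  assumes "\<gamma> > 0"
  shows "m \<bullet> (- (transpose (A + G) *v p) - (transpose (mat 1 - \<Gamma>) ** Q) *v (m - \<Gamma> *v m))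
         + ((A + G) *v m + \<gamma> *\<^sub>R p) \<bullet> p
    = - qf (Qhat Q \<Gamma>) m + (1 / \<gamma>) * (norm (\<gamma> *\<^sub>R p))\<^sup>2"
proof -
  have AGm: "((A + G) *v m) \<bullet> p = m \<bullet> (transpose (A + G) *v p)"
    by (rule inner_matrix_vector_mult_transpose)
  have mm: "m - \<Gamma> *v m = (mat 1 - \<Gamma>) *v m"
    by (simp add: matrix_vector_mult_diff_rdistrib)
  have "m \<bullet> ((transpose (mat 1 - \<Gamma>) ** Q) *v (m - \<Gamma> *v m))
      = m \<bullet> (transpose (mat 1 - \<Gamma>) *v (Q *v ((mat 1 - \<Gamma>) *v m)))"
    by (simp add: matrix_vector_mul_assoc mm) (metis matrix_mul_assoc)
  also have "\<dots> = qf (Qhat Q \<Gamma>) m"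
    unfolding qf_def Qhat_def by (simp add: matrix_vector_mul_assoc) (metis matrix_mul_assoc)
  finally have Qhat: "m \<bullet> ((transpose (mat 1 - \<Gamma>) ** Q) *v (m - \<Gamma> *v m)) = qf (Qhat Q \<Gamma>) m" .
  have "(1 / \<gamma>) * (norm (\<gamma> *\<^sub>R p))\<^sup>2 = \<gamma> * (p \<bullet> p)"
    using assms by (simp add: power_mult_distrib power2_eq_square power2_norm_eq_inner[symmetric])
  then show ?thesis
    using AGm Qhat by (simp add: inner_add_left inner_diff_right)
qed

locale lq_model =
  fixes T \<gamma> :: real and A :: "real^'n^'n" and B :: "real^'k^'n" and G \<Gamma> Q H :: "real^'n^'n"
    and R :: "real^'k^'k"
  assumes T_pos: "T > 0" and gamma_pos: "\<gamma> > 0" and R_invertible: "invertible R"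
begin

(* The system solved by the difference of a solution of (AV_N) and one of (MF):
   eta, m0 and the control ubar cancel out. *)
definition hom_sol :: "(real \<Rightarrow> real^'n) \<Rightarrow> (real \<Rightarrow> real^'n) \<Rightarrow> (real \<Rightarrow> real^'n) \<Rightarrow> (real \<Rightarrow> real^'n) \<Rightarrow> bool"
  where "hom_sol X M P Y \<longleftrightarrow>
    (\<forall>t\<in>{0..T}.
       (X has_vector_derivative
          A *v X t + (B ** matrix_inv R ** transpose B) *v Y t + G *v M t + \<gamma> *\<^sub>R P t) (at t within {0..T})
     \<and> (M has_vector_derivative (A + G) *v M t + \<gamma> *\<^sub>R P t) (at t within {0..T})
     \<and> (P has_vector_derivative
          - (transpose (A + G) *v P t) - (transpose (mat 1 - \<Gamma>) ** Q) *v (X t - \<Gamma> *v M t)) (at t within {0..T})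
     \<and> (Y has_vector_derivative
          - (transpose A *v Y t) + Q *v (X t - \<Gamma> *v M t)) (at t within {0..T}))
    \<and> M 0 = 0 \<and> P T = H *v X T \<and> Y T = - (H *v X T)"

definition feedback :: "real^'n \<Rightarrow> real^'k"
  where "feedback y = (matrix_inv R ** transpose B) *v y"

lemma B_feedback: "B *v feedback y = (B ** matrix_inv R ** transpose B) *v y"
  by (simp add: feedback_def matrix_vector_mul_assoc matrix_mul_assoc)

lemma R_feedback: "R *v feedback y = transpose B *v y"
  using matrix_mul_matrix_inv_right[OF R_invertible]
  by (simp add: feedback_def matrix_vector_mul_assoc matrix_mul_assoc)

lemma hom_sol_add:
  assumes "hom_sol X M P Y" and "hom_sol X' M' P' Y'"
  shows "hom_sol (\<lambda>t. X t + X' t) (\<lambda>t. M t + M' t) (\<lambda>t. P t + P' t) (\<lambda>t. Y t + Y' t)"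
  using assms unfolding hom_sol_def
  by (auto intro!: has_vector_derivative_eq_rhs[OF has_vector_derivative_add] simp: algebra_simps)

lemma hom_sol_scaleR:
  assumes "hom_sol X M P Y"
  shows "hom_sol (\<lambda>t. c *\<^sub>R X t) (\<lambda>t. c *\<^sub>R M t) (\<lambda>t. c *\<^sub>R P t) (\<lambda>t. c *\<^sub>R Y t)"
  using assms unfolding hom_sol_def
  by (auto intro!: has_vector_derivative_eq_rhs[OF bounded_linear.has_vector_derivative[OF bounded_linear_scaleR_right]]
      simp: algebra_simps)

lemma hom_sol_continuous:
  assumes "hom_sol X M P Y"
  shows "continuous_on {0..T} X" "continuous_on {0..T} M" "continuous_on {0..T} P" "continuous_on {0..T} Y"
  using assms unfolding hom_sol_def by (auto intro: continuous_on_vector_derivative)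

lemma hom_solD:
  assumes "hom_sol X M P Y" and "t \<in> {0..T}"
  shows "(X has_vector_derivative
          A *v X t + (B ** matrix_inv R ** transpose B) *v Y t + G *v M t + \<gamma> *\<^sub>R P t) (at t within {0..T})"
    and "(M has_vector_derivative (A + G) *v M t + \<gamma> *\<^sub>R P t) (at t within {0..T})"
    and "(P has_vector_derivative
          - (transpose (A + G) *v P t) - (transpose (mat 1 - \<Gamma>) ** Q) *v (X t - \<Gamma> *v M t)) (at t within {0..T})"
    and "(Y has_vector_derivative - (transpose A *v Y t) + Q *v (X t - \<Gamma> *v M t)) (at t within {0..T})"
  using assms unfolding hom_sol_def by auto

lemma hom_sol_boundary:
  assumes "hom_sol X M P Y"
  shows "M 0 = 0" and "P T = H *v X T" and "Y T = - (H *v X T)"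
  using assms unfolding hom_sol_def by auto

lemma hom_sol_feedback_zero:
  assumes H2: "H2 T \<gamma> A B G \<Gamma> Q H R" and sol: "hom_sol X M P Y" and X0: "X 0 = 0" and t: "t \<in> {0..T}"
  shows "feedback (Y t) = 0"
proof -
  let ?u = "\<lambda>s. feedback (Y s)"
  have dX: "(X has_vector_derivative A *v X s + B *v ?u s + G *v M s + \<gamma> *\<^sub>R P s) (at s within {0..T})"
    if "s \<in> {0..T}" for s
    using hom_solD(1)[OF sol that] by (simp add: B_feedback)
  note dM = hom_solD(2)[OF sol] and dP = hom_solD(3)[OF sol] and dY = hom_solD(4)[OF sol]
  let ?cost = "\<lambda>s. qf Q (X s - \<Gamma> *v M s) + qf R (?u s) - \<gamma> * (norm (P s))\<^sup>2"
  define \<phi> where "\<phi> s = (X s - M s) \<bullet> Y s - M s \<bullet> P s" for s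
  have "(\<phi> has_vector_derivative ?cost s) (at s within {0..T})" if s: "s \<in> {0..T}" for s
    using has_vector_derivative_diff[OF
        bounded_bilinear.has_vector_derivative[OF bounded_bilinear_inner
          has_vector_derivative_diff[OF dX[OF s] dM[OF s]] dY[OF s]]
        bounded_bilinear.has_vector_derivative[OF bounded_bilinear_inner dM[OF s] dP[OF s]]]
    unfolding H2_duality_identity[OF R_feedback] \<phi>_def[abs_def] .
  moreover have cont_u: "continuous_on {0..T} ?u"
    unfolding feedback_def using hom_sol_continuous[OF sol] by (intro continuous_intros)
  moreover have "continuous_on {0..T} ?cost"
    unfolding qf_def using hom_sol_continuous[OF sol] cont_u by (intro continuous_intros)
  ultimately have "\<phi> T = \<phi> 0 + (LINT s:{0..T}|lborel. ?cost s)"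
    by (intro set_integral_vector_derivative(1)) (use T_pos in auto)
  moreover have "\<phi> 0 = 0" and "\<phi> T = - qf H (X T)"
    using hom_sol_boundary[OF sol] X0 unfolding \<phi>_def qf_def by (simp_all add: inner_diff_left)
  ultimately have "(LINT s:{0..T}|lborel. ?cost s) + qf H (X T) \<le> 0"
    by simp
  then show ?thesis
    using H2_cost_nonpos_imp_zero[OF H2 T_pos cont_u dX dM dP X0 hom_sol_boundary(1,2)[OF sol] _ t] by blast
qed

lemma hom_sol_state_eq_mean:
  assumes H2: "H2 T \<gamma> A B G \<Gamma> Q H R" and sol: "hom_sol X M P Y" and X0: "X 0 = 0" and t: "t \<in> {0..T}"
  shows "X t = M t"
proof -
  have "((\<lambda>s. X s - M s) has_vector_derivative A *v (X s - M s)) (at s within {0..T})"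
    if s: "s \<in> {0..T}" for s
  proof -
    have "(B ** matrix_inv R ** transpose B) *v Y s = 0"
      using B_feedback[of "Y s"] hom_sol_feedback_zero[OF H2 sol X0 s] by simp
    then show ?thesis
      using has_vector_derivative_diff[OF hom_solD(1,2)[OF sol s]]
      by (simp add: algebra_simps)
  qed
  moreover obtain K where "\<And>x. norm (A *v x) \<le> K * norm x"
    using bounded_linear.bounded[OF matrix_vector_mul_bounded_linear[of A]] by (auto simp: mult.commute)
  ultimately have "norm (X t - M t) \<le> exp (K * (t - 0)) * norm (X 0 - M 0)"
    using t by (intro norm_exp_growth_bounds(1)) auto
  then show ?thesis
    using hom_sol_boundary(1)[OF sol] X0 by simp
qed

lemma hom_sol_costate_zero:
  assumes H1: "H1 T \<gamma> A G \<Gamma> Q H" and H2: "H2 T \<gamma> A B G \<Gamma> Q H R"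
    and sol: "hom_sol X M P Y" and X0: "X 0 = 0" and t: "t \<in> {0..T}"
  shows "P t = 0"
proof -
  note XM = hom_sol_state_eq_mean[OF H2 sol X0]
  let ?cost = "\<lambda>s. - qf (Qhat Q \<Gamma>) (M s) + (1 / \<gamma>) * (norm (\<gamma> *\<^sub>R P s))\<^sup>2"
  define \<psi> where "\<psi> s = M s \<bullet> P s" for s
  have "(\<psi> has_vector_derivative ?cost s) (at s within {0..T})" if s: "s \<in> {0..T}" for s
    using bounded_bilinear.has_vector_derivative[OF bounded_bilinear_inner hom_solD(2,3)[OF sol s]]
    unfolding XM[OF s] H1_duality_identity[OF gamma_pos] \<psi>_def[abs_def] .
  moreover have "continuous_on {0..T} ?cost"
    unfolding qf_def using hom_sol_continuous[OF sol] by (intro continuous_intros)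
  ultimately have "\<psi> T = \<psi> 0 + (LINT s:{0..T}|lborel. ?cost s)"
    by (rule set_integral_vector_derivative(1)) (use T_pos in auto)
  moreover have "\<psi> 0 = 0" and "\<psi> T = qf H (M T)"
    using hom_sol_boundary(1,2)[OF sol] XM[of T] T_pos unfolding \<psi>_def qf_def by simp_all
  ultimately have "(LINT s:{0..T}|lborel. ?cost s) - qf H (M T) \<le> 0"
    by simp
  moreover have "continuous_on {0..T} (\<lambda>s. \<gamma> *\<^sub>R P s)"
    using hom_sol_continuous[OF sol] by (intro continuous_intros)
  ultimately have "\<gamma> *\<^sub>R P t = 0"
    using H1_cost_nonpos_imp_zero[OF H1 T_pos _ hom_solD(2)[OF sol] hom_sol_boundary(1)[OF sol] _ t]
    by blast
  then show ?thesis
    using gamma_pos by simp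
qed

lemma hom_sol_initial_zero:
  assumes H1: "H1 T \<gamma> A G \<Gamma> Q H" and H2: "H2 T \<gamma> A B G \<Gamma> Q H R"
    and sol: "hom_sol X M P Y" and X0: "X 0 = 0"
  shows "P 0 = 0" and "Y 0 = 0"
proof -
  note P_zero = hom_sol_costate_zero[OF H1 H2 sol X0]
  show "P 0 = 0"
    using P_zero T_pos by simp
  have M_zero: "M t = 0" if t: "t \<in> {0..T}" for t
  proof -
    obtain K where "\<And>x. norm ((A + G) *v x) \<le> K * norm x"
      using bounded_linear.bounded[OF matrix_vector_mul_bounded_linear[of "A + G"]] by (auto simp: mult.commute)
    moreover have "(M has_vector_derivative (A + G) *v M s) (at s within {0..T})" if "s \<in> {0..T}" for s
      using hom_solD(2)[OF sol that] P_zero[OF that] by simp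
    ultimately have "norm (M t) \<le> exp (K * (t - 0)) * norm (M 0)"
      using t by (intro norm_exp_growth_bounds(1)) auto
    then show ?thesis
      using hom_sol_boundary(1)[OF sol] by simp
  qed
  obtain K where "\<And>x. norm (- (transpose A *v x)) \<le> K * norm x"
    using bounded_linear.bounded[OF matrix_vector_mul_bounded_linear[of "transpose A"]]
    by (auto simp: mult.commute simp del: transpose_matrix_vector)
  moreover have "(Y has_vector_derivative - (transpose A *v Y s)) (at s within {0..T})" if "s \<in> {0..T}" for s
    using hom_solD(4)[OF sol that] M_zero[OF that] hom_sol_state_eq_mean[OF H2 sol X0 that] by simp
  ultimately have "norm (Y 0) \<le> exp (K * (T - 0)) * norm (Y T)"
    using T_pos by (intro norm_exp_growth_bounds(2)) auto
  then show "Y 0 = 0"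
    using hom_sol_boundary(3)[OF sol] M_zero[of T] hom_sol_state_eq_mean[OF H2 sol X0, of T] T_pos by simp
qed

lemma hom_sol_initial_values_subspace:
  "subspace {(X 0, M 0, P 0, Y 0) | X M P Y. hom_sol X M P Y}" (is "subspace ?V")
  unfolding subspace_def
proof (intro conjI ballI allI)
  have "hom_sol (\<lambda>t. 0) (\<lambda>t. 0) (\<lambda>t. 0) (\<lambda>t. 0)"
    unfolding hom_sol_def by simp
  then show "0 \<in> ?V"
    by (force simp: zero_prod_def)
next
  fix v w assume "v \<in> ?V" and "w \<in> ?V"
  then obtain X M P Y X' M' P' Y' where sol: "hom_sol X M P Y" "v = (X 0, M 0, P 0, Y 0)"
    and sol': "hom_sol X' M' P' Y'" "w = (X' 0, M' 0, P' 0, Y' 0)"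
    by blast
  show "v + w \<in> ?V"
    unfolding mem_Collect_eq
    by (rule exI[where x = "\<lambda>t. X t + X' t"], rule exI[where x = "\<lambda>t. M t + M' t"],
        rule exI[where x = "\<lambda>t. P t + P' t"], rule exI[where x = "\<lambda>t. Y t + Y' t"])
      (simp add: sol(2) sol'(2) hom_sol_add[OF sol(1) sol'(1)])
next
  fix c v assume "v \<in> ?V"
  then obtain X M P Y where sol: "hom_sol X M P Y" "v = (X 0, M 0, P 0, Y 0)"
    by blast
  show "c *\<^sub>R v \<in> ?V"
    unfolding mem_Collect_eq
    by (rule exI[where x = "\<lambda>t. c *\<^sub>R X t"], rule exI[where x = "\<lambda>t. c *\<^sub>R M t"],
        rule exI[where x = "\<lambda>t. c *\<^sub>R P t"], rule exI[where x = "\<lambda>t. c *\<^sub>R Y t"])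
      (simp add: sol(2) hom_sol_scaleR[OF sol(1)])
qed

lemma hom_sol_initial_value_bound:
  assumes H1: "H1 T \<gamma> A G \<Gamma> Q H" and H2: "H2 T \<gamma> A B G \<Gamma> Q H R"
  obtains e where "e > 0" and "\<And>X M P Y. hom_sol X M P Y \<Longrightarrow> e * norm (X 0, M 0, P 0, Y 0) \<le> norm (X 0)"
proof -
  let ?V = "{(X 0, M 0, P 0, Y 0) | X M P Y. hom_sol X M P Y}"
  have "\<forall>v\<in>?V. fst v = 0 \<longrightarrow> v = 0"
  proof (intro ballI impI)
    fix v assume "v \<in> ?V" and "fst v = 0"
    then obtain X M P Y where sol: "hom_sol X M P Y" and v: "v = (X 0, M 0, P 0, Y 0)"
      by blast
    with \<open>fst v = 0\<close> have "X 0 = 0"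
      by simp
    then show "v = 0"
      using v hom_sol_initial_zero[OF H1 H2 sol] hom_sol_boundary(1)[OF sol] by (simp add: zero_prod_def)
  qed
  then obtain e where "e > 0" and e: "\<And>v. v \<in> ?V \<Longrightarrow> e * norm v \<le> norm (fst v)"
    using injective_imp_isometric[OF closed_subspace hom_sol_initial_values_subspace bounded_linear_fst]
      hom_sol_initial_values_subspace by blast
  show thesis
  proof (rule that[OF \<open>e > 0\<close>])
    fix X M P Y assume "hom_sol X M P Y"
    then have "(X 0, M 0, P 0, Y 0) \<in> ?V"
      by blast
    from e[OF this] show "e * norm (X 0, M 0, P 0, Y 0) \<le> norm (X 0)"
      by simp
  qed
qed

lemma hom_sol_growth:
  obtains L where "L \<ge> 0" and "\<And>X M P Y t. hom_sol X M P Y \<Longrightarrow> t \<in> {0..T} \<Longrightarrow>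
    norm (X t, M t, P t, Y t) \<le> L * norm (X 0, M 0, P 0, Y 0)"
proof -
  define F :: "(real^'n) \<times> (real^'n) \<times> (real^'n) \<times> (real^'n) \<Rightarrow> (real^'n) \<times> (real^'n) \<times> (real^'n) \<times> (real^'n)"
    where "F = (\<lambda>(x, m, p, y). (A *v x + (B ** matrix_inv R ** transpose B) *v y + G *v m + \<gamma> *\<^sub>R p,
        (A + G) *v m + \<gamma> *\<^sub>R p,
        - (transpose (A + G) *v p) - (transpose (mat 1 - \<Gamma>) ** Q) *v (x - \<Gamma> *v m),
        - (transpose A *v y) + Q *v (x - \<Gamma> *v m)))"
  have "linear F"
    by (rule linearI) (auto simp: F_def case_prod_beta algebra_simps simp del: transpose_matrix_vector)
  then obtain K where K: "K \<ge> 0" "\<And>w. norm (F w) \<le> K * norm w"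
    using bounded_linear.nonneg_bounded[of F] by (auto simp: linear_conv_bounded_linear mult.commute)
  show thesis
  proof (rule that[of "exp (K * T)"])
    show "exp (K * T) \<ge> 0"
      by simp
  next
    fix X M P Y t assume sol: "hom_sol X M P Y" and t: "t \<in> {0..T}"
    let ?w = "\<lambda>s. (X s, M s, P s, Y s)"
    have "(?w has_vector_derivative F (?w s)) (at s within {0..T})" if "s \<in> {0..T}" for s
      using hom_solD[OF sol that] unfolding F_def by (auto intro!: has_vector_derivative_Pair)
    then have "norm (?w t) \<le> exp (K * (t - 0)) * norm (?w 0)"
      using t K(2) by (intro norm_exp_growth_bounds(1)) auto
    also have "\<dots> \<le> exp (K * T) * norm (?w 0)"
      using t K(1) by (intro mult_right_mono) (auto intro: mult_left_mono)
    finally show "norm (?w t) \<le> exp (K * T) * norm (?w 0)" .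
  qed
qed

lemma hom_sol_bound:
  assumes H1: "H1 T \<gamma> A G \<Gamma> Q H" and H2: "H2 T \<gamma> A B G \<Gamma> Q H R"
  obtains C where "\<And>X M P Y t. hom_sol X M P Y \<Longrightarrow> t \<in> {0..T} \<Longrightarrow>
    norm (X t) + norm (M t) + norm (P t) + norm (Y t) \<le> C * norm (X 0)"
proof -
  obtain e where e: "e > 0" "\<And>X M P Y. hom_sol X M P Y \<Longrightarrow> e * norm (X 0, M 0, P 0, Y 0) \<le> norm (X 0)"
    using hom_sol_initial_value_bound[OF H1 H2] by blast
  obtain L where L: "L \<ge> 0" "\<And>X M P Y t. hom_sol X M P Y \<Longrightarrow> t \<in> {0..T} \<Longrightarrow>
      norm (X t, M t, P t, Y t) \<le> L * norm (X 0, M 0, P 0, Y 0)"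
    using hom_sol_growth by blast
  show thesis
  proof (rule that[of "4 * L / e"])
    fix X M P Y t assume sol: "hom_sol X M P Y" and t: "t \<in> {0..T}"
    have "norm (X t) + norm (M t) + norm (P t) + norm (Y t) \<le> 4 * norm (X t, M t, P t, Y t)"
      using norm_fst_le[of "X t" "(M t, P t, Y t)"] norm_snd_le[of "(M t, P t, Y t)" "X t"]
        norm_fst_le[of "M t" "(P t, Y t)"] norm_snd_le[of "(P t, Y t)" "M t"]
        norm_fst_le[of "P t" "Y t"] norm_snd_le[of "Y t" "P t"] by simp
    also have "\<dots> \<le> 4 * (L * norm (X 0, M 0, P 0, Y 0))"
      using L(2)[OF sol t] by simp
    also have "\<dots> \<le> 4 * (L * (norm (X 0) / e))"
      using e(2)[OF sol] \<open>e > 0\<close> \<open>L \<ge> 0\<close> by (intro mult_left_mono) (auto simp: field_simps)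
    also have "\<dots> = 4 * L / e * norm (X 0)"
      by simp
    finally show "norm (X t) + norm (M t) + norm (P t) + norm (Y t) \<le> 4 * L / e * norm (X 0)" .
  qed
qed

lemma hom_sol_AV_sol_minus_MF_sol:
  assumes AV: "AV_sol T \<gamma> A B G \<Gamma> Q H R \<eta> m0 (\<lambda>t. (matrix_inv R ** transpose B) *v y t) xbar xN mN pN yN"
    and MF: "MF_sol T \<gamma> A B G \<Gamma> Q H R \<eta> m0 m p y"
  shows "hom_sol (\<lambda>t. xN t - m t) (\<lambda>t. mN t - m t) (\<lambda>t. pN t - p t) (\<lambda>t. yN t - y t)"
  using assms unfolding hom_sol_def AV_sol_def MF_sol_def
  by (auto intro!: has_vector_derivative_eq_rhs[OF has_vector_derivative_diff]
      simp: algebra_simps matrix_vector_mul_assoc matrix_mul_assoc)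

end

theorem lemma21:
  fixes T \<gamma> :: real
    and A G \<Gamma> Q H :: "real^'n^'n"
    and B :: "real^'k^'n"
    and R :: "real^'k^'k"
    and \<eta> m0 :: "real^'n"
    and m p y :: "real \<Rightarrow> real^'n"
  assumes T_pos: "T > 0"
    and gamma_pos: "\<gamma> > 0"
    and Q_psd: "psd Q" and H_psd: "psd H" and R_pd: "pd R"
    and H1: "H1 T \<gamma> A G \<Gamma> Q H"
    and H2: "H2 T \<gamma> A B G \<Gamma> Q H R"
    and MF: "MF_sol T \<gamma> A B G \<Gamma> Q H R \<eta> m0 m p y"
    and MF_unique: "\<And>m' p' y'. MF_sol T \<gamma> A B G \<Gamma> Q H R \<eta> m0 m' p' y' \<Longrightarrow>
                      \<forall>t\<in>{0..T}. m' t = m t \<and> p' t = p t \<and> y' t = y t"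
  shows "\<exists>C. \<forall>(N::nat) (x0::nat \<Rightarrow> real^'n) xN mN pN yN.
           N \<ge> 1 \<longrightarrow>
           AV_sol T \<gamma> A B G \<Gamma> Q H R \<eta> m0
             (\<lambda>t. (matrix_inv R ** transpose B) *v y t)
             ((1 / real N) *\<^sub>R (\<Sum>i=1..N. x0 i)) xN mN pN yN \<longrightarrow>
           (\<forall>t\<in>{0..T}. norm (xN t - m t) + norm (mN t - m t) + norm (pN t - p t) + norm (yN t - y t)
               \<le> C * norm ((1 / real N) *\<^sub>R (\<Sum>i=1..N. x0 i) - m0))"
proof -
  interpret lq_model T \<gamma> A B G \<Gamma> Q H R
    using T_pos gamma_pos pd_imp_invertible[OF R_pd] by unfold_locales
  obtain C where C: "\<And>X M P Y t. hom_sol X M P Y \<Longrightarrow> t \<in> {0..T} \<Longrightarrow>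
      norm (X t) + norm (M t) + norm (P t) + norm (Y t) \<le> C * norm (X 0)"
    using hom_sol_bound[OF H1 H2] by blast
  show ?thesis
  proof (intro exI allI impI ballI)
    fix N :: nat and x0 :: "nat \<Rightarrow> real^'n" and xN mN pN yN t
    assume AV: "AV_sol T \<gamma> A B G \<Gamma> Q H R \<eta> m0 (\<lambda>t. (matrix_inv R ** transpose B) *v y t)
      ((1 / real N) *\<^sub>R (\<Sum>i=1..N. x0 i)) xN mN pN yN" and "t \<in> {0..T}"
    have "xN 0 - m 0 = (1 / real N) *\<^sub>R (\<Sum>i=1..N. x0 i) - m0"
      using AV MF unfolding AV_sol_def MF_sol_def by simp
    then show "norm (xN t - m t) + norm (mN t - m t) + norm (pN t - p t) + norm (yN t - y t)
        \<le> C * norm ((1 / real N) *\<^sub>R (\<Sum>i=1..N. x0 i) - m0)"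
      using C[OF hom_sol_AV_sol_minus_MF_sol[OF AV MF] \<open>t \<in> {0..T}\<close>] by simp
  qed
qed

end
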